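(* Let $p$ be a prime, $D$ the quaternion algebra over $\mathbb{Q}$ ramified exactly at $\{p,\infty\}$, $\mathcal{O}$ a maximal order, and $\lambda,\mu\in\mathcal{O}$ with $N(\lambda)=p-1$, $N(\mu)=p$, $\mathrm{tr}(r)=0$ where $r=\lambda\overline{\mu}$. Let $g=\begin{pmatrix}1&\lambda\\0&\mu\end{pmatrix}$, $A=g\overline{g}^T$, and for $\theta\in\mathbb{Q}$, $\theta>0$, let $W_\theta=\{\nu\in M_2(\mathcal{O})^\times:\nu A\overline{\nu}^T=\theta A\}$. Then $W_\theta$ consists exactly of the matrices $\nu=\begin{pmatrix}\alpha&\beta\\\gamma&\delta\end{pmatrix}\in M_2(\mathcal{O})^\times$ such that \[pN(p\alpha+\overline{r}\gamma)+N\big(p(\alpha r+p\beta)+\overline{r}(\gamma r+p\delta)\big)=\theta p^3,\] \[pN(\gamma)+N(\gamma r+p\delta)=\theta p^2,\] \[p\alpha\overline{\gamma}+(\alpha r+p\beta)\overline{(\gamma r+p\delta)}=-\theta p\,\overline{r}.\]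
   Context: $x\mapsto\overline{x}$ is quaternion conjugation, $N(x)=x\overline{x}$ the reduced norm, $\mathrm{tr}(x)=x+\overline{x}$ the reduced trace. For a matrix $M$ over $D$, $\overline{M}^T$ is the transpose of the entrywise conjugate. $M_2(\mathcal{O})^\times=\mathrm{GL}_2(D)\cap M_2(\mathcal{O})$. *)

theory Defs
  imports Complex_Main "HOL-Computational_Algebra.Primes"
begin

text \<open>An element x0 + x1 i + x2 j + x3 k of the quaternion algebra (a,b)_Q,
  where i^2 = a, j^2 = b, k = ij = -ji.\<close>

datatype quat = Quat (re: rat) (im1: rat) (im2: rat) (im3: rat)

definition qadd :: "quat \<Rightarrow> quat \<Rightarrow> quat" where
  "qadd x y = Quat (re x + re y) (im1 x + im1 y) (im2 x + im2 y) (im3 x + im3 y)"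

definition qneg :: "quat \<Rightarrow> quat" where
  "qneg x = Quat (- re x) (- im1 x) (- im2 x) (- im3 x)"

definition qzero :: quat where "qzero = Quat 0 0 0 0"

definition qone :: quat where "qone = Quat 1 0 0 0"

definition qsmult :: "rat \<Rightarrow> quat \<Rightarrow> quat" where
  "qsmult t x = Quat (t * re x) (t * im1 x) (t * im2 x) (t * im3 x)"

definition qmul :: "rat \<Rightarrow> rat \<Rightarrow> quat \<Rightarrow> quat \<Rightarrow> quat" where
  "qmul a b x y = Quat
     (re x * re y + a * im1 x * im1 y + b * im2 x * im2 y - a * b * im3 x * im3 y)
     (re x * im1 y + im1 x * re y - b * im2 x * im3 y + b * im3 x * im2 y)
     (re x * im2 y + im2 x * re y + a * im1 x * im3 y - a * im3 x * im1 y)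
     (re x * im3 y + im3 x * re y + im1 x * im2 y - im2 x * im1 y)"

definition qconj :: "quat \<Rightarrow> quat" where
  "qconj x = Quat (re x) (- im1 x) (- im2 x) (- im3 x)"

text \<open>reduced norm N(x) = x conj(x) and reduced trace tr(x) = x + conj(x);
  both are central (scalar) quaternions, identified with their rational value\<close>
definition qnorm :: "rat \<Rightarrow> rat \<Rightarrow> quat \<Rightarrow> rat" where
  "qnorm a b x = re (qmul a b x (qconj x))"

definition qtr :: "quat \<Rightarrow> rat" where
  "qtr x = re (qadd x (qconj x))"

definition split_at_infty :: "rat \<Rightarrow> rat \<Rightarrow> bool" where
  "split_at_infty a b \<longleftrightarrow>
     (\<exists>x y z :: real. (x, y, z) \<noteq> (0, 0, 0) \<and>
        real_of_rat a * x^2 + real_of_rat b * y^2 = z^2)"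

text \<open>Split at a prime l: the Hilbert equation A x^2 + B y^2 = z^2 has a nontrivial
  solution in Q_l, where A = num(a) den(a), B = num(b) den(b) lie in the same square
  classes as a, b.  By compactness of Z_l this is expressed as: for every k there is a
  primitive integer solution modulo l^k.\<close>
definition int_sq_class :: "rat \<Rightarrow> int" where
  "int_sq_class a = fst (quotient_of a) * snd (quotient_of a)"

definition split_at_prime :: "nat \<Rightarrow> rat \<Rightarrow> rat \<Rightarrow> bool" where
  "split_at_prime l a b \<longleftrightarrow>
     (\<forall>k::nat. \<exists>x y z :: int.
        \<not> (int l dvd x \<and> int l dvd y \<and> int l dvd z) \<and>
        (int l) ^ k dvd (int_sq_class a * x^2 + int_sq_class b * y^2 - z^2))"

definition ramified_exactly_at_p_infty :: "nat \<Rightarrow> rat \<Rightarrow> rat \<Rightarrow> bool" where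
  "ramified_exactly_at_p_infty p a b \<longleftrightarrow>
     a \<noteq> 0 \<and> b \<noteq> 0 \<and> \<not> split_at_infty a b \<and>
     (\<forall>l::nat. prime l \<longrightarrow> (\<not> split_at_prime l a b \<longleftrightarrow> l = p))"

definition is_order :: "rat \<Rightarrow> rat \<Rightarrow> quat set \<Rightarrow> bool" where
  "is_order a b \<O> \<longleftrightarrow>
     qone \<in> \<O> \<and>
     (\<forall>x\<in>\<O>. \<forall>y\<in>\<O>. qadd x y \<in> \<O> \<and> qadd x (qneg y) \<in> \<O> \<and> qmul a b x y \<in> \<O>) \<and>
     (\<exists>e0 e1 e2 e3.
        (\<forall>c0 c1 c2 c3 :: rat.
           qadd (qadd (qsmult c0 e0) (qsmult c1 e1)) (qadd (qsmult c2 e2) (qsmult c3 e3)) = qzero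
           \<longrightarrow> c0 = 0 \<and> c1 = 0 \<and> c2 = 0 \<and> c3 = 0) \<and>
        \<O> = {qadd (qadd (qsmult (of_int c0) e0) (qsmult (of_int c1) e1))
                  (qadd (qsmult (of_int c2) e2) (qsmult (of_int c3) e3)) | c0 c1 c2 c3. True})"

definition is_maximal_order :: "rat \<Rightarrow> rat \<Rightarrow> quat set \<Rightarrow> bool" where
  "is_maximal_order a b \<O> \<longleftrightarrow>
     is_order a b \<O> \<and> (\<forall>\<O>'. is_order a b \<O>' \<and> \<O> \<subseteq> \<O>' \<longrightarrow> \<O>' = \<O>)"

datatype mat2 = Mat2 (m11: quat) (m12: quat) (m21: quat) (m22: quat)

definition mmul :: "rat \<Rightarrow> rat \<Rightarrow> mat2 \<Rightarrow> mat2 \<Rightarrow> mat2" where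
  "mmul a b M N = Mat2
     (qadd (qmul a b (m11 M) (m11 N)) (qmul a b (m12 M) (m21 N)))
     (qadd (qmul a b (m11 M) (m12 N)) (qmul a b (m12 M) (m22 N)))
     (qadd (qmul a b (m21 M) (m11 N)) (qmul a b (m22 M) (m21 N)))
     (qadd (qmul a b (m21 M) (m12 N)) (qmul a b (m22 M) (m22 N)))"

definition mconjT :: "mat2 \<Rightarrow> mat2" where
  "mconjT M = Mat2 (qconj (m11 M)) (qconj (m21 M)) (qconj (m12 M)) (qconj (m22 M))"

definition mone :: mat2 where "mone = Mat2 qone qzero qzero qone"

definition msmult :: "rat \<Rightarrow> mat2 \<Rightarrow> mat2" where
  "msmult t M = Mat2 (qsmult t (m11 M)) (qsmult t (m12 M)) (qsmult t (m21 M)) (qsmult t (m22 M))"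

definition in_GL2 :: "rat \<Rightarrow> rat \<Rightarrow> mat2 \<Rightarrow> bool" where
  "in_GL2 a b M \<longleftrightarrow> (\<exists>N. mmul a b M N = mone \<and> mmul a b N M = mone)"

text \<open>M_2(\<O>)^x = GL_2(D) \<inter> M_2(\<O>)\<close>
definition M2_units :: "rat \<Rightarrow> rat \<Rightarrow> quat set \<Rightarrow> mat2 set" where
  "M2_units a b \<O> = {M. in_GL2 a b M \<and> m11 M \<in> \<O> \<and> m12 M \<in> \<O> \<and> m21 M \<in> \<O> \<and> m22 M \<in> \<O>}"

definition W_set :: "rat \<Rightarrow> rat \<Rightarrow> quat set \<Rightarrow> mat2 \<Rightarrow> rat \<Rightarrow> mat2 set" where
  "W_set a b \<O> A \<theta> = {\<nu> \<in> M2_units a b \<O>. mmul a b (mmul a b \<nu> A) (mconjT \<nu>) = msmult \<theta> A}"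

end

theory Submission
  imports Defs
begin

text \<open>
  Here A = g conj(g)^T is the Hermitian matrix [[p, r], [conj r, p]], and N(r) = p(p - 1).
  For h = [[1, r], [0, p]] one has h diag(p, 1) conj(h)^T = p A, so \<nu> A conj(\<nu>)^T = \<theta> A can be
  tested on the diagonal form evaluated at \<nu> h = [[\<alpha>, u], [\<gamma>, v]]: its (2,2) and (1,2) entries
  give the second and third equations. The first equation is the (1,1) entry after the further
  shear L = [[p, conj r], [0, 1]]; once the other entries of the Hermitian matrix \<nu> A conj(\<nu>)^T
  are fixed, it determines the remaining (1,1) entry because p \<noteq> 0.
\<close>

definition qconst :: "rat \<Rightarrow> quat" where
  "qconst c = Quat c 0 0 0"

definition herm2 :: "rat \<Rightarrow> quat \<Rightarrow> rat \<Rightarrow> mat2" where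
  "herm2 c s d = Mat2 (qconst c) s (qconj s) (qconst d)"

lemmas quat_defs = qadd_def qsmult_def qmul_def qconj_def qnorm_def qtr_def qconst_def qone_def qzero_def

lemma qadd_assoc: "qadd (qadd x y) z = qadd x (qadd y z)"
  by (simp add: qadd_def)

lemma qadd_commute: "qadd x y = qadd y x"
  by (simp add: qadd_def)

lemma qadd_left_commute: "qadd x (qadd y z) = qadd y (qadd x z)"
  by (simp add: qadd_def)

lemmas qadd_ac = qadd_assoc qadd_commute qadd_left_commute

lemma qconj_qadd: "qconj (qadd x y) = qadd (qconj x) (qconj y)"
  by (simp add: qadd_def qconj_def)

lemma qconj_qconj: "qconj (qconj x) = x"
  by (simp add: qconj_def)

lemma qconj_qconst: "qconj (qconst c) = qconst c"
  by (simp add: qconj_def qconst_def)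

lemma qconj_eq_self_iff: "qconj x = x \<longleftrightarrow> x = qconst (re x)"
  by (cases x) (auto simp: qconj_def qconst_def)

lemma qsmult_cancel: "t \<noteq> 0 \<Longrightarrow> qsmult t x = qsmult t y \<longleftrightarrow> x = y"
  by (cases x; cases y) (simp add: qsmult_def)

lemma qconst_inject: "qconst c = qconst d \<longleftrightarrow> c = d"
  by (simp add: qconst_def)

lemma qsmult_qconj_pure: "re r = 0 \<Longrightarrow> qsmult (- t) (qconj r) = qsmult t r"
  by (simp add: quat_defs)

lemma mconjT_mconjT: "mconjT (mconjT M) = M"
  by (simp add: mconjT_def qconj_qconj)

lemma mconjT_eq_self_iff: "mconjT M = M \<longleftrightarrow> (\<exists>c s d. M = herm2 c s d)"
proof
  assume "mconjT M = M"
  then have "M = herm2 (re (m11 M)) (m12 M) (re (m22 M))"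
    by (cases M) (auto simp: mconjT_def herm2_def qconj_eq_self_iff)
  then show "\<exists>c s d. M = herm2 c s d" by blast
qed (auto simp: mconjT_def herm2_def qconj_qconst qconj_qconj)

lemma herm2_inject: "herm2 c s d = herm2 c' s' d' \<longleftrightarrow> c = c' \<and> s = s' \<and> d = d'"
  by (auto simp: herm2_def qconst_inject)

lemma msmult_herm2: "msmult t (herm2 c s d) = herm2 (t * c) (qsmult t s) (t * d)"
  by (simp add: msmult_def herm2_def quat_defs)

context
  fixes a b :: rat
begin

lemma qmul_assoc: "qmul a b (qmul a b x y) z = qmul a b x (qmul a b y z)"
  by (simp add: qmul_def algebra_simps)

lemma qmul_qadd_left: "qmul a b (qadd x y) z = qadd (qmul a b x z) (qmul a b y z)"
  by (simp add: qmul_def qadd_def algebra_simps)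

lemma qmul_qadd_right: "qmul a b x (qadd y z) = qadd (qmul a b x y) (qmul a b x z)"
  by (simp add: qmul_def qadd_def algebra_simps)

lemma qconj_qmul: "qconj (qmul a b x y) = qmul a b (qconj y) (qconj x)"
  by (simp add: qmul_def qconj_def algebra_simps)

lemma qnorm_qmul_qconj: "qnorm a b (qmul a b x (qconj y)) = qnorm a b x * qnorm a b y"
  by (simp add: quat_defs) algebra

lemma qtr_qmul_self_pure: "re r = 0 \<Longrightarrow> qtr (qmul a b r r) = - 2 * qnorm a b r"
  by (simp add: quat_defs)

lemma mmul_assoc: "mmul a b (mmul a b M N) K = mmul a b M (mmul a b N K)"
  by (simp add: mmul_def qmul_qadd_left qmul_qadd_right qmul_assoc qadd_ac)

lemma mconjT_mmul: "mconjT (mmul a b M N) = mmul a b (mconjT N) (mconjT M)"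
  by (simp add: mmul_def mconjT_def qconj_qmul qconj_qadd qadd_ac)

lemma mmul_msmult_left: "mmul a b (msmult t M) N = msmult t (mmul a b M N)"
  by (simp add: mmul_def msmult_def quat_defs algebra_simps)

lemma mmul_msmult_right: "mmul a b M (msmult t N) = msmult t (mmul a b M N)"
  by (simp add: mmul_def msmult_def quat_defs algebra_simps)

abbreviation mcongr :: "mat2 \<Rightarrow> mat2 \<Rightarrow> mat2" where
  "mcongr M H \<equiv> mmul a b (mmul a b M H) (mconjT M)"

lemma mcongr_mmul: "mcongr (mmul a b M N) H = mcongr M (mcongr N H)"
  by (simp add: mconjT_mmul mmul_assoc)

lemma mcongr_msmult: "mcongr M (msmult t H) = msmult t (mcongr M H)"
  by (simp add: mmul_msmult_left mmul_msmult_right)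

lemma mconjT_mcongr: "mconjT (mcongr M H) = mcongr M (mconjT H)"
  by (simp add: mconjT_mmul mconjT_mconjT mmul_assoc)

lemma mcongr_herm2: "\<exists>c' s' d'. mcongr M (herm2 c s d) = herm2 c' s' d'"
  by (simp add: mconjT_eq_self_iff[symmetric] mconjT_mcongr)
    (metis mconjT_eq_self_iff)

lemma mcongr_diag:
  "mcongr (Mat2 x y z w) (herm2 t qzero 1) =
     herm2 (t * qnorm a b x + qnorm a b y)
       (qadd (qsmult t (qmul a b x (qconj z))) (qmul a b y (qconj w)))
       (t * qnorm a b z + qnorm a b w)"
  by (simp add: mmul_def mconjT_def herm2_def quat_defs algebra_simps)

lemma mcongr_shear:
  "mcongr (Mat2 (qconst t) (qconj r) qzero qone) (herm2 c s d) =
     herm2 (t^2 * c + t * qtr (qmul a b s r) + d * qnorm a b r)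
       (qadd (qsmult t s) (qsmult d (qconj r))) d"
  by (simp add: mmul_def mconjT_def herm2_def quat_defs algebra_simps power2_eq_square)

lemma mcongr_upper_triangular:
  "mcongr (Mat2 qone r qzero (qconst t)) (herm2 t qzero 1) =
     herm2 (t + qnorm a b r) (qsmult t r) (t^2)"
  by (simp add: mmul_def mconjT_def herm2_def quat_defs algebra_simps power2_eq_square)

lemma gram_upper_unitriangular:
  "mmul a b (Mat2 qone x qzero y) (mconjT (Mat2 qone x qzero y)) =
     herm2 (1 + qnorm a b x) (qmul a b x (qconj y)) (qnorm a b y)"
  by (simp add: mmul_def mconjT_def herm2_def quat_defs algebra_simps)

lemma similitude_expressions:
  fixes P :: rat and r \<alpha> \<beta> \<gamma> \<delta> :: quat
  assumes r_norm: "qnorm a b r = P * (P - 1)"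
    and E: "mcongr (Mat2 \<alpha> \<beta> \<gamma> \<delta>) (herm2 P r P) = herm2 e1 s e2"
  defines "u \<equiv> qadd (qmul a b \<alpha> r) (qsmult P \<beta>)"
    and "v \<equiv> qadd (qmul a b \<gamma> r) (qsmult P \<delta>)"
  shows "P * qnorm a b \<gamma> + qnorm a b v = P * e2"
    and "qadd (qsmult P (qmul a b \<alpha> (qconj \<gamma>))) (qmul a b u (qconj v)) = qsmult P s"
    and "P * qnorm a b (qadd (qsmult P \<alpha>) (qmul a b (qconj r) \<gamma>))
           + qnorm a b (qadd (qsmult P u) (qmul a b (qconj r) v))
         = P * (P\<^sup>2 * e1 + P * qtr (qmul a b s r) + e2 * qnorm a b r)"
proof -
  define D where "D = herm2 P qzero 1"
  define h where "h = Mat2 qone r qzero (qconst P)"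
  define L where "L = Mat2 (qconst P) (qconj r) qzero qone"
  have hDh: "mcongr h D = msmult P (herm2 P r P)"
    unfolding h_def D_def mcongr_upper_triangular r_norm msmult_herm2
    by (simp add: algebra_simps power2_eq_square)
  have "mmul a b (Mat2 \<alpha> \<beta> \<gamma> \<delta>) h = Mat2 \<alpha> u \<gamma> v"
    unfolding h_def u_def v_def by (simp add: mmul_def quat_defs algebra_simps)
  then have Q1: "mcongr (Mat2 \<alpha> u \<gamma> v) D = msmult P (herm2 e1 s e2)"
    by (metis mcongr_mmul hDh mcongr_msmult E)
  then show "P * qnorm a b \<gamma> + qnorm a b v = P * e2"
    and "qadd (qsmult P (qmul a b \<alpha> (qconj \<gamma>))) (qmul a b u (qconj v)) = qsmult P s"
    unfolding D_def mcongr_diag msmult_herm2 herm2_inject by simp_all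
  have "mmul a b L (Mat2 \<alpha> u \<gamma> v) = Mat2 (qadd (qsmult P \<alpha>) (qmul a b (qconj r) \<gamma>))
      (qadd (qsmult P u) (qmul a b (qconj r) v)) \<gamma> v"
    unfolding L_def by (simp add: mmul_def quat_defs algebra_simps)
  then have "mcongr (Mat2 (qadd (qsmult P \<alpha>) (qmul a b (qconj r) \<gamma>))
      (qadd (qsmult P u) (qmul a b (qconj r) v)) \<gamma> v) D = msmult P (mcongr L (herm2 e1 s e2))"
    by (metis mcongr_mmul Q1 mcongr_msmult)
  then show "P * qnorm a b (qadd (qsmult P \<alpha>) (qmul a b (qconj r) \<gamma>))
           + qnorm a b (qadd (qsmult P u) (qmul a b (qconj r) v))
         = P * (P\<^sup>2 * e1 + P * qtr (qmul a b s r) + e2 * qnorm a b r)"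
    unfolding D_def L_def mcongr_diag mcongr_shear msmult_herm2 herm2_inject by simp
qed

lemma similitude_iff_equations:
  fixes P \<theta> :: rat and r \<alpha> \<beta> \<gamma> \<delta> :: quat
  assumes P: "P \<noteq> 0" and r_pure: "re r = 0" and r_norm: "qnorm a b r = P * (P - 1)"
  defines "u \<equiv> qadd (qmul a b \<alpha> r) (qsmult P \<beta>)"
    and "v \<equiv> qadd (qmul a b \<gamma> r) (qsmult P \<delta>)"
  shows "mcongr (Mat2 \<alpha> \<beta> \<gamma> \<delta>) (herm2 P r P) = msmult \<theta> (herm2 P r P) \<longleftrightarrow>
     P * qnorm a b (qadd (qsmult P \<alpha>) (qmul a b (qconj r) \<gamma>))
       + qnorm a b (qadd (qsmult P u) (qmul a b (qconj r) v)) = \<theta> * P ^ 3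
     \<and> P * qnorm a b \<gamma> + qnorm a b v = \<theta> * P ^ 2
     \<and> qadd (qsmult P (qmul a b \<alpha> (qconj \<gamma>))) (qmul a b u (qconj v)) = qsmult (- \<theta> * P) (qconj r)"
proof -
  obtain e1 s e2 where E: "mcongr (Mat2 \<alpha> \<beta> \<gamma> \<delta>) (herm2 P r P) = herm2 e1 s e2"
    using mcongr_herm2 by blast
  note expr = similitude_expressions[OF r_norm E, folded u_def v_def]
  have eq2: "P * qnorm a b \<gamma> + qnorm a b v = \<theta> * P ^ 2 \<longleftrightarrow> e2 = \<theta> * P"
    using P by (auto simp: expr(1) power2_eq_square)
  have "qsmult (- \<theta> * P) (qconj r) = qsmult P (qsmult \<theta> r)"
    using qsmult_qconj_pure[OF r_pure, of "\<theta> * P"] by (simp add: qsmult_def)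
  then have eq3: "qadd (qsmult P (qmul a b \<alpha> (qconj \<gamma>))) (qmul a b u (qconj v))
      = qsmult (- \<theta> * P) (qconj r) \<longleftrightarrow> s = qsmult \<theta> r"
    by (simp add: expr(2) qsmult_cancel[OF P])
  have eq1: "P * qnorm a b (qadd (qsmult P \<alpha>) (qmul a b (qconj r) \<gamma>))
       + qnorm a b (qadd (qsmult P u) (qmul a b (qconj r) v)) = \<theta> * P ^ 3 \<longleftrightarrow> e1 = \<theta> * P"
    if s: "s = qsmult \<theta> r" and e2: "e2 = \<theta> * P"
  proof -
    have "qtr (qmul a b s r) = \<theta> * qtr (qmul a b r r)"
      unfolding s by (simp add: quat_defs algebra_simps)
    then have tr: "qtr (qmul a b s r) = - 2 * \<theta> * (P * (P - 1))"
      using qtr_qmul_self_pure[OF r_pure] r_norm by simp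
    have "P * (P\<^sup>2 * e1 + P * qtr (qmul a b s r) + e2 * qnorm a b r)
        = \<theta> * P ^ 3 + P ^ 3 * (e1 - \<theta> * P)"
      unfolding tr e2 r_norm by (simp add: algebra_simps power2_eq_square power3_eq_cube)
    then show ?thesis
      using P by (simp add: expr(3))
  qed
  have "msmult \<theta> (herm2 P r P) = herm2 (\<theta> * P) (qsmult \<theta> r) (\<theta> * P)"
    by (simp add: msmult_herm2)
  then show ?thesis
    unfolding E using eq1 eq2 eq3 herm2_inject by metis
qed
end

theorem corollary5p7:
  fixes p :: nat and a b \<theta> :: rat and \<O> :: "quat set" and lam mu r :: quat and g A :: mat2
  assumes "prime p"
    and "ramified_exactly_at_p_infty p a b"
    and "is_maximal_order a b \<O>"
    and "lam \<in> \<O>" and "mu \<in> \<O>"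
    and "qnorm a b lam = of_nat p - 1"
    and "qnorm a b mu = of_nat p"
    and "r = qmul a b lam (qconj mu)"
    and "qtr r = 0"
    and "g = Mat2 qone lam qzero mu"
    and "A = mmul a b g (mconjT g)"
    and "\<theta> > 0"
  shows "W_set a b \<O> A \<theta> =
    {\<nu> \<in> M2_units a b \<O>.
       let \<alpha> = m11 \<nu>; \<beta> = m12 \<nu>; \<gamma> = m21 \<nu>; \<delta> = m22 \<nu>; P = of_nat p;
           u = qadd (qmul a b \<alpha> r) (qsmult P \<beta>);
           v = qadd (qmul a b \<gamma> r) (qsmult P \<delta>)
       in P * qnorm a b (qadd (qsmult P \<alpha>) (qmul a b (qconj r) \<gamma>))
            + qnorm a b (qadd (qsmult P u) (qmul a b (qconj r) v)) = \<theta> * P ^ 3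
        \<and> P * qnorm a b \<gamma> + qnorm a b v = \<theta> * P ^ 2
        \<and> qadd (qsmult P (qmul a b \<alpha> (qconj \<gamma>))) (qmul a b u (qconj v))
            = qsmult (- \<theta> * P) (qconj r)}"
proof -
  define P :: rat where "P = of_nat p"
  have "P \<noteq> 0"
    using \<open>prime p\<close> prime_gt_0_nat unfolding P_def by simp
  moreover have "re r = 0"
    using \<open>qtr r = 0\<close> by (simp add: qtr_def qadd_def qconj_def)
  moreover have "qnorm a b r = P * (P - 1)"
    using assms(6-8) qnorm_qmul_qconj unfolding P_def by (simp add: mult.commute)
  moreover have "A = herm2 P r P"
    using assms(6-8,10,11) gram_upper_unitriangular unfolding P_def by simp
  ultimately show ?thesis
    unfolding W_set_def P_def[symmetric] Let_def
    by (intro Collect_cong conj_cong refl) (metis mat2.collapse similitude_iff_equations)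
qed

end
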